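(* Let $E$ be a finite set. The U-matroid rank functions on $E$ are precisely the restrictions $\rho|_\mathcal{D}$ of matroid rank functions $\rho:2^E\to\mathbb{N}$ to accessible distributive sublattices $\mathcal{D}\subseteq 2^E$.
   Context: An accessible distributive lattice on a finite set $E$ is a family $\mathcal{D}\subseteq 2^E$ containing $\emptyset$ and $E$, closed under union and intersection, such that every nonempty $A\in\mathcal{D}$ contains some $x$ with $A\setminus\{x\}\in\mathcal{D}$. A U-matroid rank function on $E$ is a function $\rho:\mathcal{D}\to\mathbb{N}$ on an accessible distributive lattice $\mathcal{D}\subseteq2^E$ satisfying $\rho(\emptyset)=0$; $\rho(A)\le\rho(B)$ whenever $A\subseteq B$; $\rho(A)+\rho(B)\ge\rho(A\cup B)+\rho(A\cap B)$; and $\rho(A\cup\{e\})-\rho(A)\le1$ whenever $A,A\cup\{e\}\in\mathcal{D}$. A matroid rank function is such a function with $\mathcal{D}=2^E$. *)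

theory Defs
  imports Main
begin

definition accessible_distributive_lattice :: "'a set \<Rightarrow> 'a set set \<Rightarrow> bool" where
  "accessible_distributive_lattice E D \<longleftrightarrow>
     D \<subseteq> Pow E \<and> {} \<in> D \<and> E \<in> D \<and>
     (\<forall>A\<in>D. \<forall>B\<in>D. A \<union> B \<in> D \<and> A \<inter> B \<in> D) \<and>
     (\<forall>A\<in>D. A \<noteq> {} \<longrightarrow> (\<exists>x\<in>A. A - {x} \<in> D))"

definition umatroid_rank :: "'a set \<Rightarrow> 'a set set \<Rightarrow> ('a set \<Rightarrow> nat) \<Rightarrow> bool" where
  "umatroid_rank E D rho \<longleftrightarrow>
     accessible_distributive_lattice E D \<and>
     rho {} = 0 \<and>
     (\<forall>A\<in>D. \<forall>B\<in>D. A \<subseteq> B \<longrightarrow> rho A \<le> rho B) \<and>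
     (\<forall>A\<in>D. \<forall>B\<in>D. rho A + rho B \<ge> rho (A \<union> B) + rho (A \<inter> B)) \<and>
     (\<forall>A e. A \<in> D \<longrightarrow> A \<union> {e} \<in> D \<longrightarrow> rho (A \<union> {e}) \<le> rho A + 1)"

definition matroid_rank :: "'a set \<Rightarrow> ('a set \<Rightarrow> nat) \<Rightarrow> bool" where
  "matroid_rank E rho \<longleftrightarrow> umatroid_rank E (Pow E) rho"

end

theory Submission
  imports Defs
begin

text \<open>Restricting a matroid rank function to an accessible distributive sublattice clearly
gives a U-matroid rank function. Conversely, a U-matroid rank function \<open>\<rho>\<close> on \<open>D\<close> extends
to the whole power set by \<open>r X = min\<^sub>A\<^sub>\<in>\<^sub>D (\<rho> A + |X - A|)\<close>. This \<open>r\<close> is a matroid rank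
function because \<open>\<rho>\<close> and \<open>(X, A) \<mapsto> |X - A|\<close> are both submodular, and it agrees with \<open>\<rho>\<close> on
\<open>D\<close> because \<open>\<rho> A \<le> \<rho> B + |A - B|\<close> for \<open>A, B \<in> D\<close>: walking down from \<open>A \<union> B\<close> to \<open>B\<close> by
accessibility, each removed element lowers the rank by at most one.\<close>

lemma accessible_distributive_latticeD:
  assumes "accessible_distributive_lattice E D"
  shows "D \<subseteq> Pow E" "{} \<in> D" "A \<in> D \<Longrightarrow> B \<in> D \<Longrightarrow> A \<union> B \<in> D"
    "A \<in> D \<Longrightarrow> B \<in> D \<Longrightarrow> A \<inter> B \<in> D"
    "A \<in> D \<Longrightarrow> A \<noteq> {} \<Longrightarrow> \<exists>x\<in>A. A - {x} \<in> D"
  using assms unfolding accessible_distributive_lattice_def by blast+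

lemma umatroid_rankD:
  assumes "umatroid_rank E D rho"
  shows "accessible_distributive_lattice E D" "rho {} = 0"
    "A \<in> D \<Longrightarrow> B \<in> D \<Longrightarrow> A \<subseteq> B \<Longrightarrow> rho A \<le> rho B"
    "A \<in> D \<Longrightarrow> B \<in> D \<Longrightarrow> rho (A \<union> B) + rho (A \<inter> B) \<le> rho A + rho B"
    "A \<in> D \<Longrightarrow> A \<union> {e} \<in> D \<Longrightarrow> rho (A \<union> {e}) \<le> rho A + 1"
  using assms unfolding umatroid_rank_def by blast+

lemma accessible_distributive_lattice_Pow: "accessible_distributive_lattice E (Pow E)"
  unfolding accessible_distributive_lattice_def by blast

lemma umatroid_rank_restrict:
  assumes "matroid_rank E r" and "accessible_distributive_lattice E D"
    and "\<forall>A\<in>D. rho A = r A"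
  shows "umatroid_rank E D rho"
proof -
  have "D \<subseteq> Pow E" and "{} \<in> D" and "\<forall>A\<in>D. \<forall>B\<in>D. A \<union> B \<in> D \<and> A \<inter> B \<in> D"
    using accessible_distributive_latticeD[OF assms(2)] by auto
  then show ?thesis
    using assms unfolding matroid_rank_def umatroid_rank_def by (simp add: subset_iff)
qed

lemma umatroid_rank_le_card_Diff_of_subset:
  assumes U: "umatroid_rank E D rho" and fin: "finite E"
    and "C' \<in> D" "C \<in> D" "C \<subseteq> C'"
  shows "rho C' \<le> rho C + card (C' - C)"
  using assms(3-5)
proof (induction "card C'" arbitrary: C' C rule: less_induct)
  case less
  note lattice = accessible_distributive_latticeD[OF umatroid_rankD(1)[OF U]]
  show ?case
  proof (cases "C' = C")
    case False
    then obtain x where x: "x \<in> C'" "C' - {x} \<in> D"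
      using lattice(5) less.prems by blast
    have "finite C'" using less.prems lattice(1) fin by (auto intro: finite_subset)
    then have smaller: "card (C' - {x}) < card C'" using x(1) by (rule card_Diff1_less)
    show ?thesis
    proof (cases "x \<in> C")
      case False
      have "(C' - {x}) \<union> {x} = C'" using x(1) by blast
      then have "rho C' \<le> rho (C' - {x}) + 1"
        using umatroid_rankD(5)[OF U x(2), of x] less.prems(1) by simp
      moreover have "rho (C' - {x}) \<le> rho C + card (C' - {x} - C)"
        using less.hyps[OF smaller x(2) less.prems(2)] less.prems(3) False by blast
      moreover have "C' - C = insert x (C' - {x} - C)" using x(1) False by auto
      ultimately show ?thesis using \<open>finite C'\<close> by simp
    next
      case True
      \<comment> \<open>submodularity on \<open>C' - {x}\<close> and \<open>C\<close> passes to the smaller pair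
        \<open>C - {x} \<subseteq> C' - {x}\<close>, which has the same difference \<open>C' - C\<close>\<close>
      have "C - {x} = (C' - {x}) \<inter> C" using less.prems(3) by auto
      then have "C - {x} \<in> D" using lattice(4) x(2) less.prems(2) by simp
      have "C' - {x} - (C - {x}) = C' - C" using True by blast
      then have "rho (C' - {x}) \<le> rho (C - {x}) + card (C' - C)"
        using less.hyps[OF smaller x(2) \<open>C - {x} \<in> D\<close>] less.prems(3) by fastforce
      moreover have "(C' - {x}) \<union> C = C'" using x(1) less.prems(3) True by blast
      then have "rho C' + rho (C - {x}) \<le> rho (C' - {x}) + rho C"
        using umatroid_rankD(4)[OF U x(2) less.prems(2)] \<open>C - {x} = (C' - {x}) \<inter> C\<close> by simp
      ultimately show ?thesis by linarith
    qed
  qed simp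
qed

lemma umatroid_rank_le_card_Diff:
  assumes U: "umatroid_rank E D rho" and fin: "finite E" and "A \<in> D" "B \<in> D"
  shows "rho A \<le> rho B + card (A - B)"
proof -
  have "A \<union> B \<in> D"
    using accessible_distributive_latticeD(3)[OF umatroid_rankD(1)[OF U] assms(3,4)] .
  then have "rho A \<le> rho (A \<union> B)"
    using umatroid_rankD(3)[OF U assms(3)] by simp
  also have "\<dots> \<le> rho B + card (A \<union> B - B)"
    using umatroid_rank_le_card_Diff_of_subset[OF U fin \<open>A \<union> B \<in> D\<close> assms(4)] by simp
  also have "A \<union> B - B = A - B" by blast
  finally show ?thesis .
qed

lemma card_Diff_Un_Int_le:
  assumes "finite (X \<union> Y)"
  shows "card (X \<union> Y - (A \<union> B)) + card (X \<inter> Y - (A \<inter> B)) \<le> card (X - A) + card (Y - B)"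
proof -
  let ?U = "X \<union> Y - (A \<union> B)" and ?V = "X \<inter> Y - (A \<inter> B)" and ?P = "X - A" and ?Q = "Y - B"
  have fin: "finite ?U" "finite ?V" "finite ?P" "finite ?Q" using assms by auto
  have "card ?U + card ?V = card (?U \<union> ?V) + card (?U \<inter> ?V)"
    using card_Un_Int fin by blast
  also have "\<dots> \<le> card (?P \<union> ?Q) + card (?P \<inter> ?Q)"
    using fin by (intro add_mono card_mono) auto
  also have "\<dots> = card ?P + card ?Q"
    using card_Un_Int fin by metis
  finally show ?thesis .
qed

definition rank_extension :: "'a set set \<Rightarrow> ('a set \<Rightarrow> nat) \<Rightarrow> 'a set \<Rightarrow> nat" where
  "rank_extension D rho X = Min ((\<lambda>A. rho A + card (X - A)) ` D)"

lemma rank_extension_le: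
  "finite D \<Longrightarrow> A \<in> D \<Longrightarrow> rank_extension D rho X \<le> rho A + card (X - A)"
  unfolding rank_extension_def by simp

lemma rank_extension_attained:
  assumes "finite D" "A\<^sub>0 \<in> D"
  obtains A where "A \<in> D" "rank_extension D rho X = rho A + card (X - A)"
proof -
  have "rank_extension D rho X \<in> (\<lambda>A. rho A + card (X - A)) ` D"
    unfolding rank_extension_def using assms by (intro Min_in) auto
  then show ?thesis using that by blast
qed

context
  fixes E :: "'a set" and D :: "'a set set" and rho :: "'a set \<Rightarrow> nat"
  assumes U: "umatroid_rank E D rho" and fin: "finite E"
begin

private lemmas lattice = accessible_distributive_latticeD[OF umatroid_rankD(1)[OF U]]

private lemma finite_D: "finite D"
  using lattice(1) fin by (meson finite_Pow_iff finite_subset)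

lemma rank_extension_eq:
  assumes "A \<in> D"
  shows "rank_extension D rho A = rho A"
proof (rule antisym)
  show "rank_extension D rho A \<le> rho A"
    using rank_extension_le[OF finite_D assms, of rho A] by simp
  obtain B where "B \<in> D" "rank_extension D rho A = rho B + card (A - B)"
    using rank_extension_attained[OF finite_D assms] .
  then show "rho A \<le> rank_extension D rho A"
    using umatroid_rank_le_card_Diff[OF U fin assms] by simp
qed

lemma matroid_rank_rank_extension: "matroid_rank E (rank_extension D rho)"
  (is "matroid_rank E ?r")
  unfolding matroid_rank_def umatroid_rank_def
proof (intro conjI allI impI ballI accessible_distributive_lattice_Pow)
  show "?r {} = 0"
    using rank_extension_eq[OF lattice(2)] umatroid_rankD(2)[OF U] by simp
next
  fix X Y assume "X \<in> Pow E" "Y \<in> Pow E" "X \<subseteq> Y"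
  obtain C where "C \<in> D" "?r Y = rho C + card (Y - C)"
    using rank_extension_attained[OF finite_D lattice(2)] .
  moreover have "card (X - C) \<le> card (Y - C)"
    using \<open>X \<subseteq> Y\<close> \<open>Y \<in> Pow E\<close> fin by (intro card_mono) (auto intro: finite_subset)
  ultimately show "?r X \<le> ?r Y" using rank_extension_le[OF finite_D, of C rho X] by linarith
next
  fix X Y assume "X \<in> Pow E" "Y \<in> Pow E"
  obtain A where A: "A \<in> D" "?r X = rho A + card (X - A)"
    using rank_extension_attained[OF finite_D lattice(2)] .
  obtain B where B: "B \<in> D" "?r Y = rho B + card (Y - B)"
    using rank_extension_attained[OF finite_D lattice(2)] .
  have "?r (X \<union> Y) + ?r (X \<inter> Y) \<le>
      rho (A \<union> B) + rho (A \<inter> B) + (card (X \<union> Y - (A \<union> B)) + card (X \<inter> Y - (A \<inter> B)))"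
    using rank_extension_le[OF finite_D lattice(3)[OF A(1) B(1)], of rho "X \<union> Y"]
      rank_extension_le[OF finite_D lattice(4)[OF A(1) B(1)], of rho "X \<inter> Y"] by linarith
  also have "\<dots> \<le> rho A + rho B + (card (X - A) + card (Y - B))"
  proof (rule add_mono)
    show "rho (A \<union> B) + rho (A \<inter> B) \<le> rho A + rho B"
      using umatroid_rankD(4)[OF U A(1) B(1)] .
    show "card (X \<union> Y - (A \<union> B)) + card (X \<inter> Y - (A \<inter> B)) \<le> card (X - A) + card (Y - B)"
      using \<open>X \<in> Pow E\<close> \<open>Y \<in> Pow E\<close> fin by (intro card_Diff_Un_Int_le) (auto intro: finite_subset)
  qed
  finally show "?r (X \<union> Y) + ?r (X \<inter> Y) \<le> ?r X + ?r Y" using A B by linarith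
next
  fix X e assume "X \<in> Pow E"
  obtain A where A: "A \<in> D" "?r X = rho A + card (X - A)"
    using rank_extension_attained[OF finite_D lattice(2)] .
  have "finite X" using \<open>X \<in> Pow E\<close> fin by (auto intro: finite_subset)
  have "card (X \<union> {e} - A) \<le> card (insert e (X - A))"
    using \<open>finite X\<close> by (intro card_mono) auto
  also have "\<dots> \<le> card (X - A) + 1" by (simp add: card_insert_le_m1)
  finally show "?r (X \<union> {e}) \<le> ?r X + 1"
    using rank_extension_le[OF finite_D A(1), of rho "X \<union> {e}"] A by linarith
qed

end

theorem corollary4p13:
  fixes E :: "'a set" and D :: "'a set set" and rho :: "'a set \<Rightarrow> nat"
  assumes "finite E"
  shows "umatroid_rank E D rho \<longleftrightarrow>
           (accessible_distributive_lattice E D \<and>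
            (\<exists>r. matroid_rank E r \<and> (\<forall>A\<in>D. rho A = r A)))"
proof
  assume U: "umatroid_rank E D rho"
  have "matroid_rank E (rank_extension D rho)"
    using matroid_rank_rank_extension[OF U assms] .
  moreover have "\<forall>A\<in>D. rho A = rank_extension D rho A"
    using rank_extension_eq[OF U assms] by simp
  ultimately show "accessible_distributive_lattice E D \<and> (\<exists>r. matroid_rank E r \<and> (\<forall>A\<in>D. rho A = r A))"
    using umatroid_rankD(1)[OF U] by blast
next
  assume "accessible_distributive_lattice E D \<and> (\<exists>r. matroid_rank E r \<and> (\<forall>A\<in>D. rho A = r A))"
  then show "umatroid_rank E D rho"
    by (elim conjE exE) (rule umatroid_rank_restrict)
qed

end
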